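(* For every $\alpha\in(0,\pi/2]$, the system of two equations in the real unknowns $(d,u_1)$ $$18(4\cos\alpha-3)u_1^2+3d(d^2-10)\Big(\cos\tfrac{\alpha}{2}-2\cos\tfrac{3\alpha}{2}\Big)u_1+\cos^2\tfrac{\alpha}{2}\Big(-3d^6+18d^4-34d^2-420+4d^2(d^4-6d^2+30)\cos\alpha\Big)=0,$$ $$36\Big(3\sin\tfrac{3\alpha}{2}-11\sin\tfrac{\alpha}{2}\Big)u_1^2+6\sin\tfrac{\alpha}{2}\Big(5\cos\tfrac{\alpha}{2}-3\cos\tfrac{3\alpha}{2}\Big)d(d^2-10)u_1+\Big(840\alpha-8d^2(d^4-6d^2+30)\sin\alpha+d^2(3d^4-18d^2+34)\sin(2\alpha)\Big)\cos\tfrac{\alpha}{2}=0$$ has no real solutions.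
   Context: This system arises in interpolating the $G^2$ data and arc length of a circular arc of inner angle $2\alpha$ by a planar Pythagorean-hodograph curve of degree $7$, in the case $u_2=-u_1+\frac16 d(d^2-10)\cos(\alpha/2)$ of the non-symmetric preimage coefficients; only the explicit equations above are needed. *)

theory Defs
  imports Complex_Main
begin

end

theory Submission
  imports Defs
begin

(* Multiplying the second equation by cos(\<alpha>/2) and adding 2\<alpha> times the first cancels
   the constant terms; completing the square in u1 leaves

     cos(\<alpha>/2)^2 (\<beta> w^2/4 - P p(d) - Q q(d)) = \<beta> (6 u1 - cos(\<alpha>/2) w/2)^2

   with w = d(d^2 - 10), \<beta> = \<alpha>(3 - 4 cos \<alpha>) + sin \<alpha> (4 - 3 cos \<alpha>),
   P = 8(sin \<alpha> - \<alpha> cos \<alpha>), Q = 2\<alpha> - sin 2\<alpha> and two even sextics p, q with q \<ge> 0.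
   Monotonicity arguments give \<beta> > 0, \<beta> \<le> 5P/4 and Q \<ge> P/10 on (0, pi/2], and with
   these bounds the left-hand side is negative whenever d \<noteq> 0.  For d = 0 the identity
   forces u1 = 0, and then the first equation reads -420 cos(\<alpha>/2)^2 = 0. *)

lemma DERIV_pos_imp_pos:
  fixes f f' :: "real \<Rightarrow> real"
  assumes "0 < a" "f 0 = 0"
    and "\<And>x. (f has_real_derivative f' x) (at x)"
    and "\<And>x. 0 < x \<Longrightarrow> x < a \<Longrightarrow> 0 < f' x"
  shows "0 < f a"
proof -
  have "continuous_on {0..a} f"
    using assms(3) by (meson DERIV_isCont continuous_at_imp_continuous_on)
  then have "f 0 < f a"
    using DERIV_pos_imp_increasing_open[OF \<open>0 < a\<close>] assms(3,4) by blast
  with \<open>f 0 = 0\<close> show ?thesis by simp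
qed

lemma DERIV_nonneg_imp_nonneg:
  fixes f f' :: "real \<Rightarrow> real"
  assumes "0 \<le> a" "f 0 = 0"
    and "\<And>x. (f has_real_derivative f' x) (at x)"
    and "\<And>x. 0 \<le> x \<Longrightarrow> x \<le> a \<Longrightarrow> 0 \<le> f' x"
  shows "0 \<le> f a"
proof -
  have "f 0 \<le> f a"
    using DERIV_nonneg_imp_nondecreasing[OF \<open>0 \<le> a\<close>] assms(3,4) by blast
  with \<open>f 0 = 0\<close> show ?thesis by simp
qed

lemma x_cos_less_sin:
  assumes "0 < x" "x \<le> pi"
  shows "x * cos x < sin x"
proof -
  have "0 < sin x - x * cos x"
  proof (rule DERIV_pos_imp_pos[where f = "\<lambda>t. sin t - t * cos t" and f' = "\<lambda>t. t * sin t"])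
    fix t :: real
    show "((\<lambda>t. sin t - t * cos t) has_real_derivative t * sin t) (at t)"
      by (rule derivative_eq_intros refl)+ (simp add: algebra_simps)
    assume "0 < t" "t < x"
    then show "0 < t * sin t" using assms by (simp add: sin_gt_zero)
  qed (use assms in simp_all)
  then show ?thesis by simp
qed

lemma half_le_sin:
  assumes "0 \<le> x" "x \<le> pi/2"
  shows "x / 2 \<le> sin x"
proof -
  \<comment> \<open>\<open>sin x = 2 sin(x/2) cos(x/2) \<ge> x cos\<^sup>2(x/2) = x (1 + cos x)/2\<close>\<close>
  have "x/2 * cos (x/2) \<le> sin (x/2)"
    using x_cos_less_sin[of "x/2"] assms by (cases "x = 0") auto
  moreover have "0 \<le> 2 * cos (x/2)" using assms by (intro mult_nonneg_nonneg cos_ge_zero) auto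
  ultimately have "x/2 * cos (x/2) * (2 * cos (x/2)) \<le> sin (x/2) * (2 * cos (x/2))"
    by (rule mult_right_mono)
  then have "x * (cos (x/2))^2 \<le> 2 * sin (x/2) * cos (x/2)"
    by (simp add: power2_eq_square mult_ac)
  also have "\<dots> = sin x" using sin_double[of "x/2"] by simp
  finally have "x * ((1 + cos x) / 2) \<le> sin x"
    using cos_double_cos[of "x/2"] by simp
  moreover have "0 \<le> x * cos x" using assms by (intro mult_nonneg_nonneg cos_ge_zero) auto
  ultimately show ?thesis by (simp add: field_simps)
qed

lemma square_coeff_pos:
  assumes "0 < a" "a \<le> pi"
  shows "0 < a * (3 - 4 * cos a) + sin a * (4 - 3 * cos a)"
proof (rule DERIV_pos_imp_pos[where f = "\<lambda>x. x * (3 - 4 * cos x) + sin x * (4 - 3 * cos x)"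
      and f' = "\<lambda>x. 6 * (sin x)^2 + 4 * x * sin x", simplified])
  fix x :: real
  show "((\<lambda>x. x * (3 - 4 * cos x) + sin x * (4 - 3 * cos x))
      has_real_derivative 6 * (sin x)^2 + 4 * x * sin x) (at x)"
    by (rule derivative_eq_intros refl)+ (use sin_cos_squared_add[of x] in algebra)
  assume "0 < x" "x < a"
  then have "0 < sin x" using assms by (intro sin_gt_zero) auto
  then show "0 < 6 * (sin x)^2 + 4 * x * sin x" using \<open>0 < x\<close> by (simp add: add_pos_pos)
qed fact

lemma square_coeff_le:
  assumes "0 \<le> a" "a \<le> pi"
  shows "a * (3 - 4 * cos a) + sin a * (4 - 3 * cos a) \<le> 10 * (sin a - a * cos a)"
proof -
  have "0 \<le> 10 * (sin a - a * cos a) - (a * (3 - 4 * cos a) + sin a * (4 - 3 * cos a))"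
  proof (rule DERIV_nonneg_imp_nonneg[where
        f = "\<lambda>x. 10 * (sin x - x * cos x) - (x * (3 - 4 * cos x) + sin x * (4 - 3 * cos x))"
        and f' = "\<lambda>x. 6 * sin x * (x - sin x)"])
    fix x :: real
    show "((\<lambda>x. 10 * (sin x - x * cos x) - (x * (3 - 4 * cos x) + sin x * (4 - 3 * cos x)))
        has_real_derivative 6 * sin x * (x - sin x)) (at x)"
      by (rule derivative_eq_intros refl)+ (use sin_cos_squared_add[of x] in algebra)
    assume "0 \<le> x" "x \<le> a"
    then have "0 \<le> sin x" "sin x \<le> x" using assms by (auto intro!: sin_ge_zero sin_x_le_x)
    then show "0 \<le> 6 * sin x * (x - sin x)" by simp
  qed (use assms in simp_all)
  then show ?thesis by simp
qed

lemma four_fifths_sin_sub_x_cos_le: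
  assumes "0 \<le> a" "a \<le> pi/2"
  shows "4/5 * (sin a - a * cos a) \<le> 2 * a - sin (2 * a)"
proof -
  have "0 \<le> 2 * a - 2 * sin a * cos a - 4/5 * (sin a - a * cos a)"
  proof (rule DERIV_nonneg_imp_nonneg[where f = "\<lambda>x. 2 * x - 2 * sin x * cos x - 4/5 * (sin x - x * cos x)"
        and f' = "\<lambda>x. 4 * sin x * (sin x - x / 5)"])
    fix x :: real
    show "((\<lambda>x. 2 * x - 2 * sin x * cos x - 4/5 * (sin x - x * cos x))
        has_real_derivative 4 * sin x * (sin x - x / 5)) (at x)"
      by (rule derivative_eq_intros refl)+ (use sin_cos_squared_add[of x] in algebra)
    assume "0 \<le> x" "x \<le> a"
    then have "0 \<le> sin x" "x / 2 \<le> sin x"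
      using assms sin_ge_zero half_le_sin[of x] by auto
    then show "0 \<le> 4 * sin x * (sin x - x / 5)" using \<open>0 \<le> x\<close> by simp
  qed (use assms in simp_all)
  then show ?thesis by (simp add: sin_double)
qed

definition interp_eq1 :: "real \<Rightarrow> real \<Rightarrow> real \<Rightarrow> real" where
  "interp_eq1 \<alpha> d u1 =
     18 * (4 * cos \<alpha> - 3) * u1^2
       + 3 * d * (d^2 - 10) * (cos (\<alpha>/2) - 2 * cos (3*\<alpha>/2)) * u1
       + (cos (\<alpha>/2))^2 * (- 3 * d^6 + 18 * d^4 - 34 * d^2 - 420
            + 4 * d^2 * (d^4 - 6 * d^2 + 30) * cos \<alpha>)"

definition interp_eq2 :: "real \<Rightarrow> real \<Rightarrow> real \<Rightarrow> real" where
  "interp_eq2 \<alpha> d u1 =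
     36 * (3 * sin (3*\<alpha>/2) - 11 * sin (\<alpha>/2)) * u1^2
       + 6 * sin (\<alpha>/2) * (5 * cos (\<alpha>/2) - 3 * cos (3*\<alpha>/2)) * d * (d^2 - 10) * u1
       + (840 * \<alpha> - 8 * d^2 * (d^4 - 6 * d^2 + 30) * sin \<alpha>
            + d^2 * (3 * d^4 - 18 * d^2 + 34) * sin (2*\<alpha>)) * cos (\<alpha>/2)"

lemma interp_eqs_combination:
  fixes \<alpha> d u :: real
  defines "c \<equiv> cos (\<alpha>/2)" and "w \<equiv> d * (d^2 - 10)"
    and "\<beta> \<equiv> \<alpha> * (3 - 4 * cos \<alpha>) + sin \<alpha> * (4 - 3 * cos \<alpha>)"
  shows "c * interp_eq2 \<alpha> d u + 2 * \<alpha> * interp_eq1 \<alpha> d u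
    = c^2 * (\<beta> * w^2 / 4 - 8 * (sin \<alpha> - \<alpha> * cos \<alpha>) * (d^6 - 6*d^4 + 30*d^2)
               - (2 * \<alpha> - sin (2*\<alpha>)) * (3*d^6 - 18*d^4 + 34*d^2))
      - \<beta> * (6*u - c*w/2)^2"
proof -
  define s where "s = sin (\<alpha>/2)"
  have three_halves: "3*\<alpha>/2 = \<alpha> + \<alpha>/2" by simp
  have sin_\<alpha>: "sin \<alpha> = 2*s*c" unfolding s_def c_def using sin_double[of "\<alpha>/2"] by simp
  have cos_\<alpha>: "cos \<alpha> = 2*c^2 - 1" unfolding c_def using cos_double_cos[of "\<alpha>/2"] by simp
  have pyth: "s^2 + c^2 = 1" unfolding s_def c_def by simp
  show ?thesis
    unfolding interp_eq1_def interp_eq2_def three_halves cos_add sin_add sin_double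
      \<beta>_def w_def c_def[symmetric] s_def[symmetric] sin_\<alpha> cos_\<alpha>
    using pyth by algebra
qed

lemma sextic_combination_bound:
  fixes \<beta> P Q d :: real
  assumes "0 < P" "\<beta> \<le> 5/4 * P" "P / 10 \<le> Q" "d \<noteq> 0"
  shows "\<beta> * (d * (d^2 - 10))^2 / 4 < P * (d^6 - 6*d^4 + 30*d^2) + Q * (3*d^6 - 18*d^4 + 34*d^2)"
proof -
  define y where "y = d^2"
  define p where "p = d^6 - 6*d^4 + 30*d^2"
  define q where "q = 3*d^6 - 18*d^4 + 34*d^2"
  define W where "W = (d * (d^2 - 10))^2"
  have "y > 0" unfolding y_def using \<open>d \<noteq> 0\<close> by simp
  have "q = y * (3*(y-3)^2 + 7)" unfolding q_def y_def by algebra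
  then have "0 \<le> q" using \<open>y > 0\<close> by simp
  have "p + q / 10 - 5/16 * W = y * (79/80 * (y - 1)^2 + 17/40 * y + 93/80)"
    unfolding p_def q_def W_def y_def by algebra
  also have "\<dots> > 0" using \<open>y > 0\<close> by (simp add: add_nonneg_pos)
  finally have "P * (5/16 * W) < P * (p + q / 10)"
    using \<open>0 < P\<close> by simp
  moreover have "\<beta> * W \<le> 5/4 * P * W"
    using \<open>\<beta> \<le> 5/4 * P\<close> by (rule mult_right_mono) (simp add: W_def)
  moreover have "P / 10 * q \<le> Q * q"
    using \<open>P / 10 \<le> Q\<close> \<open>0 \<le> q\<close> by (rule mult_right_mono)
  ultimately show ?thesis
    unfolding p_def[symmetric] q_def[symmetric] W_def[symmetric] by (simp add: algebra_simps)
qed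

lemma interp_bracket_neg:
  fixes \<alpha> d :: real
  assumes "0 < \<alpha>" "\<alpha> \<le> pi/2" "d \<noteq> 0"
  shows "(\<alpha> * (3 - 4 * cos \<alpha>) + sin \<alpha> * (4 - 3 * cos \<alpha>)) * (d * (d^2 - 10))^2 / 4
    - 8 * (sin \<alpha> - \<alpha> * cos \<alpha>) * (d^6 - 6*d^4 + 30*d^2)
    - (2 * \<alpha> - sin (2*\<alpha>)) * (3*d^6 - 18*d^4 + 34*d^2) < 0"
proof -
  have "0 < 8 * (sin \<alpha> - \<alpha> * cos \<alpha>)" using assms x_cos_less_sin[of \<alpha>] by simp
  moreover have "\<alpha> * (3 - 4 * cos \<alpha>) + sin \<alpha> * (4 - 3 * cos \<alpha>) \<le> 5/4 * (8 * (sin \<alpha> - \<alpha> * cos \<alpha>))"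
    using assms square_coeff_le[of \<alpha>] by simp
  moreover have "8 * (sin \<alpha> - \<alpha> * cos \<alpha>) / 10 \<le> 2 * \<alpha> - sin (2*\<alpha>)"
    using assms four_fifths_sin_sub_x_cos_le[of \<alpha>] by simp
  ultimately show ?thesis
    using sextic_combination_bound \<open>d \<noteq> 0\<close> by fastforce
qed

theorem mainTheorem3:
  fixes \<alpha> :: real
  assumes "0 < \<alpha>" and "\<alpha> \<le> pi / 2"
  shows "\<not> (\<exists>d u1 :: real.
     18 * (4 * cos \<alpha> - 3) * u1^2
       + 3 * d * (d^2 - 10) * (cos (\<alpha>/2) - 2 * cos (3*\<alpha>/2)) * u1
       + (cos (\<alpha>/2))^2 * (- 3 * d^6 + 18 * d^4 - 34 * d^2 - 420
            + 4 * d^2 * (d^4 - 6 * d^2 + 30) * cos \<alpha>) = 0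
   \<and> 36 * (3 * sin (3*\<alpha>/2) - 11 * sin (\<alpha>/2)) * u1^2
       + 6 * sin (\<alpha>/2) * (5 * cos (\<alpha>/2) - 3 * cos (3*\<alpha>/2)) * d * (d^2 - 10) * u1
       + (840 * \<alpha> - 8 * d^2 * (d^4 - 6 * d^2 + 30) * sin \<alpha>
            + d^2 * (3 * d^4 - 18 * d^2 + 34) * sin (2*\<alpha>)) * cos (\<alpha>/2) = 0)"
proof -
  have "0 < cos (\<alpha>/2)" using assms by (intro cos_gt_zero) auto
  have "0 < \<alpha> * (3 - 4 * cos \<alpha>) + sin \<alpha> * (4 - 3 * cos \<alpha>)" (is "0 < ?\<beta>")
    using assms by (intro square_coeff_pos) auto
  have "\<not> (interp_eq1 \<alpha> d u = 0 \<and> interp_eq2 \<alpha> d u = 0)" for d u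
  proof
    assume eqs: "interp_eq1 \<alpha> d u = 0 \<and> interp_eq2 \<alpha> d u = 0"
    then have square: "(cos (\<alpha>/2))^2 * (?\<beta> * (d * (d^2 - 10))^2 / 4
        - 8 * (sin \<alpha> - \<alpha> * cos \<alpha>) * (d^6 - 6*d^4 + 30*d^2)
        - (2 * \<alpha> - sin (2*\<alpha>)) * (3*d^6 - 18*d^4 + 34*d^2))
        = ?\<beta> * (6*u - cos (\<alpha>/2) * (d * (d^2 - 10))/2)^2"
      (is "(cos (\<alpha>/2))^2 * ?bracket = ?\<beta> * ?completed^2")
      using interp_eqs_combination[of \<alpha> d u] by simp
    show False
    proof (cases "d = 0")
      case True
      with square \<open>0 < ?\<beta>\<close> have "u = 0" by simp
      with True eqs \<open>0 < cos (\<alpha>/2)\<close> show False by (simp add: interp_eq1_def)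
    next
      case False
      with assms \<open>0 < cos (\<alpha>/2)\<close> have "(cos (\<alpha>/2))^2 * ?bracket < 0"
        by (intro mult_pos_neg interp_bracket_neg) auto
      moreover have "0 \<le> ?\<beta> * ?completed^2"
        using \<open>0 < ?\<beta>\<close> by simp
      ultimately show False using square by linarith
    qed
  qed
  then show ?thesis unfolding interp_eq1_def interp_eq2_def by blast
qed

end
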